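(* For every $i\in[d]$, all $x$ with $\|x\|_2\le1$ and every time step $t\ge1$, with probability at least $1-\frac1{c_1}-\exp\!\left(-\frac{32(c_4-1)^2\eta^2m^2\bar\Lambda^2t^2}{\pi}\right)$ over the random initialization, for constants $c_1>10$ and $c_4\ge1$, $$\big|\phi(N(x_{1:i};\theta^{(t)}_i))-\phi(P(x_{1:i};\theta^{(t)}_i))\big|\le\big|N(x_{1:i};\theta^{(t)}_i)-P(x_{1:i};\theta^{(t)}_i)\big|\le\frac{192\eta^2m^{1.5}\bar\Lambda^2c_1c_4\epsilon_at^2\sqrt{\log m}}{\sqrt\pi},$$ where $\bar\Lambda=6c_1\epsilon_a\sqrt{2\log m}$.
   Context: UNF setting. Fix $d\ge1$, $m\ge2$, $\epsilon_a>0$, $Q\ge1$, learning rate $\eta>0$. For $\|x_{1:i}\|_2\le1$, $\hat x_{1:i}=(x_1,\dots,x_i,\sqrt{1-\|x_{1:i}\|_2^2})$. $\sigma(u)=\max\{u,0\}$, $\sigma'(u)=\mathbf 1\{u\ge0\}$; $\phi(u)=e^u$ ($u<0$), $u+1$ ($u\ge0$). Frozen random initial parameters $a_{i,r}\sim\mathcal N(0,\epsilon_a^2)$, $\bar w_{i,r}\sim\mathcal N(0,\frac1mI_{i+1})$, $\bar b_{i,r}\sim\mathcal N(0,\frac1m)$, independent. Offsets $\theta_i=(w_{i,r},b_{i,r})_r$. Network $N(x_{1:i};\theta_i)=\sum_ra_{i,r}\sigma(\langle\bar w_{i,r}+w_{i,r},\hat x_{1:i}\rangle+\bar b_{i,r}+b_{i,r})$;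 pseudo-network $P(x_{1:i};\theta_i)=\sum_ra_{i,r}\sigma'(\langle\bar w_{i,r},\hat x_{1:i}\rangle+\bar b_{i,r})(\langle\bar w_{i,r}+w_{i,r},\hat x_{1:i}\rangle+\bar b_{i,r}+b_{i,r})$. Approximate loss $\tilde L(\nabla f,x)=\sum_i\big(\sum_{j=1}^Q\Delta_{x_i}\phi(N(q^{(j)}_i;\theta_i))-\log\phi(N(x_{1:i};\theta_i))\big)$ with $\Delta_{x_i}=(x_i+1)/Q$, $q^{(j)}_i=(x_1,\dots,x_{i-1},-1+j\Delta_{x_i})$. $\theta^{(t)}$ are SGD iterates: $\theta^{(0)}=0$, $\theta^{(t+1)}=\theta^{(t)}-\eta\nabla_\theta\tilde L(\nabla f^{(t)},x^{(t)})$, $x^{(t)}$ uniform from a training set in the unit ball. *)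

theory Defs
  imports "HOL-Probability.Probability"
begin

definition relu :: "real \<Rightarrow> real" where "relu u = max u 0"
definition relu' :: "real \<Rightarrow> real" where "relu' u = (if u \<ge> 0 then 1 else 0)"
definition phi :: "real \<Rightarrow> real" where "phi u = (if u < 0 then exp u else u + 1)"
text \<open>Derivative of phi (it is differentiable everywhere, derivative 1 at 0).\<close>
definition phi' :: "real \<Rightarrow> real" where "phi' u = (if u < 0 then exp u else 1)"

text \<open>Indices of the frozen random initial parameters (1-based: i in 1..d, r in 1..m,
  k in 1..i+1).\<close>
datatype pid = A nat nat | Wb nat nat nat | Bb nat nat

definition init_index :: "nat \<Rightarrow> nat \<Rightarrow> pid set" where
  "init_index d m =
     {A i r | i r. i \<in> {1..d} \<and> r \<in> {1..m}}
   \<union> {Wb i r k | i r k. i \<in> {1..d} \<and> r \<in> {1..m} \<and> k \<in> {1..i+1}}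
   \<union> {Bb i r | i r. i \<in> {1..d} \<and> r \<in> {1..m}}"

text \<open>Standard deviation of each initial parameter: a ~ N(0, eps_a^2),
  wbar ~ N(0, I/m), bbar ~ N(0, 1/m).\<close>
definition init_sd :: "nat \<Rightarrow> real \<Rightarrow> pid \<Rightarrow> real" where
  "init_sd m eps_a j = (case j of A i r \<Rightarrow> eps_a | _ \<Rightarrow> 1 / sqrt (real m))"

definition init_measure :: "nat \<Rightarrow> nat \<Rightarrow> real \<Rightarrow> (pid \<Rightarrow> real) measure" where
  "init_measure d m eps_a =
     PiM (init_index d m) (\<lambda>j. density lborel (normal_density 0 (init_sd m eps_a j)))"

text \<open>Inputs are vectors x :: nat => real with coordinates x 1, ..., x d.
  xhat i x is the (i+1)-vector (x_1,...,x_i, sqrt(1 - ||x_{1:i}||^2)).\<close>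
definition xhat :: "nat \<Rightarrow> (nat \<Rightarrow> real) \<Rightarrow> nat \<Rightarrow> real" where
  "xhat i x k = (if k \<le> i then x k else if k = i + 1 then sqrt (1 - (\<Sum>l=1..i. (x l)\<^sup>2)) else 0)"

text \<open>Offsets theta_i: r |-> (w_{i,r}, b_{i,r}), w_{i,r} indexed by 1..i+1.\<close>
type_synonym offsets = "nat \<Rightarrow> (nat \<Rightarrow> real) \<times> real"

definition preact :: "(pid \<Rightarrow> real) \<Rightarrow> nat \<Rightarrow> offsets \<Rightarrow> nat \<Rightarrow> (nat \<Rightarrow> real) \<Rightarrow> real" where
  "preact \<omega> i th r x =
     (\<Sum>k=1..i+1. (\<omega> (Wb i r k) + fst (th r) k) * xhat i x k) + \<omega> (Bb i r) + snd (th r)"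

definition preact0 :: "(pid \<Rightarrow> real) \<Rightarrow> nat \<Rightarrow> nat \<Rightarrow> (nat \<Rightarrow> real) \<Rightarrow> real" where
  "preact0 \<omega> i r x = (\<Sum>k=1..i+1. \<omega> (Wb i r k) * xhat i x k) + \<omega> (Bb i r)"

definition netN :: "nat \<Rightarrow> (pid \<Rightarrow> real) \<Rightarrow> nat \<Rightarrow> offsets \<Rightarrow> (nat \<Rightarrow> real) \<Rightarrow> real" where
  "netN m \<omega> i th x = (\<Sum>r=1..m. \<omega> (A i r) * relu (preact \<omega> i th r x))"

definition netP :: "nat \<Rightarrow> (pid \<Rightarrow> real) \<Rightarrow> nat \<Rightarrow> offsets \<Rightarrow> (nat \<Rightarrow> real) \<Rightarrow> real" where
  "netP m \<omega> i th x = (\<Sum>r=1..m. \<omega> (A i r) * relu' (preact0 \<omega> i r x) * preact \<omega> i th r x)"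

text \<open>Quadrature points q_i^{(j)} = (x_1,...,x_{i-1}, -1 + j * Delta_{x_i}), Delta = (x_i+1)/Q.\<close>
definition qpt :: "nat \<Rightarrow> nat \<Rightarrow> (nat \<Rightarrow> real) \<Rightarrow> nat \<Rightarrow> nat \<Rightarrow> real" where
  "qpt Q i x j = x(i := -1 + real j * ((x i + 1) / real Q))"

text \<open>Gradient of the approximate loss tilde L with respect to (w_{i,r}, b_{i,r}),
  with the convention sigma'(u) = 1{u >= 0} for the ReLU derivative.
  Only the i-th summand of tilde L depends on theta_i.\<close>
definition grad_w :: "nat \<Rightarrow> nat \<Rightarrow> (pid \<Rightarrow> real) \<Rightarrow> nat \<Rightarrow> offsets \<Rightarrow> (nat \<Rightarrow> real) \<Rightarrow> nat \<Rightarrow> nat \<Rightarrow> real" where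
  "grad_w m Q \<omega> i th x r k =
     (\<Sum>j=1..Q. ((x i + 1) / real Q) * phi' (netN m \<omega> i th (qpt Q i x j))
                 * \<omega> (A i r) * relu' (preact \<omega> i th r (qpt Q i x j)) * xhat i (qpt Q i x j) k)
     - (phi' (netN m \<omega> i th x) / phi (netN m \<omega> i th x))
                 * \<omega> (A i r) * relu' (preact \<omega> i th r x) * xhat i x k"

definition grad_b :: "nat \<Rightarrow> nat \<Rightarrow> (pid \<Rightarrow> real) \<Rightarrow> nat \<Rightarrow> offsets \<Rightarrow> (nat \<Rightarrow> real) \<Rightarrow> nat \<Rightarrow> real" where
  "grad_b m Q \<omega> i th x r =
     (\<Sum>j=1..Q. ((x i + 1) / real Q) * phi' (netN m \<omega> i th (qpt Q i x j))
                 * \<omega> (A i r) * relu' (preact \<omega> i th r (qpt Q i x j)))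
     - (phi' (netN m \<omega> i th x) / phi (netN m \<omega> i th x))
                 * \<omega> (A i r) * relu' (preact \<omega> i th r x)"

primrec sgd :: "nat \<Rightarrow> nat \<Rightarrow> real \<Rightarrow> (pid \<Rightarrow> real) \<Rightarrow> nat \<Rightarrow> (nat \<Rightarrow> nat \<Rightarrow> real) \<Rightarrow> nat \<Rightarrow> offsets" where
  "sgd m Q \<eta> \<omega> i xs 0 = (\<lambda>r. (\<lambda>k. 0, 0))"
| "sgd m Q \<eta> \<omega> i xs (Suc t) =
     (\<lambda>r. (\<lambda>k. fst (sgd m Q \<eta> \<omega> i xs t r) k - \<eta> * grad_w m Q \<omega> i (sgd m Q \<eta> \<omega> i xs t) (xs t) r k,
           snd (sgd m Q \<eta> \<omega> i xs t r) - \<eta> * grad_b m Q \<omega> i (sgd m Q \<eta> \<omega> i xs t) (xs t) r))"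

end

theory Submission
  imports Defs
begin

text \<open>
  Write z_r for the initial pre-activation of neuron r and D_r for the part of its pre-activation
  contributed by the offsets, so that N and P differ only through the neurons with
  |z_r| \<le> |D_r|, each of which contributes at most |a_r| |D_r|.
  One SGD step changes D_r(x) by \<eta> a_r times a quadrature expression bounded by 9/2,
  hence |D_r| \<le> (9/2) \<eta> t |a_r| for every initialization.
  With probability at least 1 - 1/c1 all |a_r| are at most \<Lambda> (Gaussian tails and a union bound),
  and then |N - P| \<le> \<epsilon> \<Lambda> times the number of neurons with |z_r| \<le> \<epsilon>, where \<epsilon> = (9/2) \<eta> t \<Lambda>.
  Each z_r is N(0, 2/m), so it lies within \<epsilon> of the kink with probability at most \<epsilon> sqrt(m/\<pi>),
  independently over r; Hoeffding's inequality bounds the number of such neurons.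
  Finally, phi is 1-Lipschitz.
\<close>

lemma phi_increment_bounds:
  fixes u v :: real
  assumes "v \<le> u"
  shows "0 \<le> phi u - phi v \<and> phi u - phi v \<le> u - v"
proof (cases "u < 0")
  case True
  have "exp u - exp v = exp u * (1 - exp (v - u))"
    by (simp add: exp_diff field_simps)
  also have "\<dots> \<le> 1 - exp (v - u)"
    using True assms by (intro mult_left_le_one_le) auto
  also have "\<dots> \<le> u - v"
    using exp_ge_add_one_self[of "v - u"] by linarith
  finally show ?thesis
    using True assms by (simp add: phi_def)
next
  case False
  show ?thesis
  proof (cases "v < 0")
    case True
    have "phi u - phi v = u + 1 - exp v"
      using True \<open>\<not> u < 0\<close> by (simp add: phi_def)
    moreover have "1 + v \<le> exp v" "exp v \<le> 1"
      using True by (simp_all add: exp_ge_add_one_self)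
    ultimately show ?thesis
      using \<open>\<not> u < 0\<close> by linarith
  next
    case False
    then show ?thesis
      using \<open>\<not> u < 0\<close> assms by (simp add: phi_def)
  qed
qed

lemma phi_lipschitz: "\<bar>phi u - phi v\<bar> \<le> \<bar>u - v\<bar>"
  using phi_increment_bounds[of u v] phi_increment_bounds[of v u] by (cases "v \<le> u") auto

lemma phi'_bounds: "0 \<le> phi' u" "phi' u \<le> 1"
  unfolding phi'_def by auto

lemma phi'_div_phi_bounds: "0 \<le> phi' u / phi u" "phi' u / phi u \<le> 1"
  unfolding phi'_def phi_def by auto

lemma relu'_bounds: "0 \<le> relu' u" "relu' u \<le> 1"
  unfolding relu'_def by auto

lemma relu_linearization_error:
  "\<bar>relu (z + D) - relu' z * (z + D)\<bar> \<le> (if \<bar>z\<bar> \<le> \<bar>D\<bar> then \<bar>D\<bar> else 0)"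
  unfolding relu_def relu'_def by auto

lemma sum_weighted_shift_bounds:
  fixes w v :: "'a \<Rightarrow> real"
  assumes w: "\<And>j. j \<in> J \<Longrightarrow> 0 \<le> w j \<and> w j \<le> 1"
    and v: "\<And>j. j \<in> J \<Longrightarrow> \<bar>v j\<bar> \<le> R" and R: "1 \<le> R"
  shows "real (card J) * (1 - R) \<le> (\<Sum>j\<in>J. w j * (v j + 1))"
    and "(\<Sum>j\<in>J. w j * (v j + 1)) \<le> real (card J) * (R + 1)"
proof -
  have term_bounds: "1 - R \<le> w j * (v j + 1) \<and> w j * (v j + 1) \<le> R + 1" if "j \<in> J" for j
  proof (cases "0 \<le> v j + 1")
    case True
    have "0 \<le> w j * (v j + 1)"
      using True w[OF that] by simp
    moreover have "w j * (v j + 1) \<le> v j + 1"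
      using True w[OF that] by (simp add: mult_left_le_one_le)
    ultimately show ?thesis
      using v[OF that] R by linarith
  next
    case False
    then have "v j + 1 \<le> w j * (v j + 1)"
      using w[OF that] by (simp add: mult_le_cancel_right1)
    moreover have "w j * (v j + 1) \<le> 0"
      using False w[OF that] by (simp add: mult_nonneg_nonpos)
    ultimately show ?thesis
      using v[OF that] R by linarith
  qed
  show "real (card J) * (1 - R) \<le> (\<Sum>j\<in>J. w j * (v j + 1))"
    using term_bounds by (intro sum_bounded_below) blast
  show "(\<Sum>j\<in>J. w j * (v j + 1)) \<le> real (card J) * (R + 1)"
    using term_bounds by (intro sum_bounded_above) blast
qed

lemma quadrature_minus_log_term_bound:
  fixes a S B :: real
  assumes a: "-1 \<le> a" "a \<le> 1"
    and S: "(a + 1) * (1 - sqrt (3 - 2 * a\<^sup>2)) \<le> S" "S \<le> (a + 1) * (sqrt (3 - 2 * a\<^sup>2) + 1)"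
    and B: "0 \<le> B" "B \<le> 2"
  shows "\<bar>S - B\<bar> \<le> 9/2"
proof -
  define R where "R = sqrt (3 - 2 * a\<^sup>2)"
  have a2: "a\<^sup>2 \<le> 1"
    using a by (simp add: abs_square_le_1)
  have R2: "R\<^sup>2 = 3 - 2 * a\<^sup>2"
    unfolding R_def using a2 by simp
  have R1: "1 \<le> R"
    unfolding R_def using a2 by simp
  have "R \<le> sqrt 4"
    unfolding R_def using zero_le_power2[of a] by (intro real_sqrt_le_mono) linarith
  then have R_le_2: "R \<le> 2"
    by simp
  \<comment> \<open>AM-GM: 2 (a + 1) R \<le> (a + 1)^2 + R^2 = 4 + 2a - a^2.\<close>
  have "2 * ((a + 1) * R) \<le> (a + 1)\<^sup>2 + R\<^sup>2"
    using sum_squares_bound[of "a + 1" R] by (simp add: power2_eq_square algebra_simps)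
  then have "2 * ((a + 1) * (R + 1)) \<le> 9 - (1 - a) * (3 - a)"
    unfolding R2 by (simp add: power2_eq_square algebra_simps)
  moreover have "0 \<le> (1 - a) * (3 - a)"
    using a by simp
  ultimately have up: "(a + 1) * (R + 1) \<le> 9/2"
    by linarith
  have "2 * (1 - R) \<le> (a + 1) * (1 - R)"
    using a R1 by (intro mult_right_mono_neg) auto
  then have "2 * (1 - R) \<le> S"
    using S(1) unfolding R_def[symmetric] by (rule order_trans)
  then have lower: "- (9/2) \<le> S - B"
    using B R_le_2 by (simp add: algebra_simps)
  have upper: "S - B \<le> 9/2"
    using S B up unfolding R_def[symmetric] by linarith
  show ?thesis
    by (rule abs_leI) (use lower upper in linarith)+
qed

section \<open>Gaussian estimates\<close>

lemma normal_density_le: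
  assumes "0 < \<sigma>"
  shows "normal_density \<mu> \<sigma> x \<le> 1 / (\<sigma> * sqrt (2 * pi))"
proof -
  have "sqrt (2 * pi * \<sigma>\<^sup>2) = \<sigma> * sqrt (2 * pi)"
    using assms by (simp add: real_sqrt_mult mult.commute)
  then show ?thesis
    using assms unfolding normal_density_def by (simp add: divide_right_mono)
qed

lemma (in prob_space) prob_abs_le_normal:
  assumes X: "distributed M lborel X (normal_density \<mu> \<sigma>)" and \<sigma>: "0 < \<sigma>" and \<epsilon>: "0 \<le> \<epsilon>"
  shows "prob {\<omega> \<in> space M. \<bar>X \<omega>\<bar> \<le> \<epsilon>} \<le> 2 * \<epsilon> / (\<sigma> * sqrt (2 * pi))"
proof -
  have event: "{\<omega> \<in> space M. \<bar>X \<omega>\<bar> \<le> \<epsilon>} = X -` {-\<epsilon>..\<epsilon>} \<inter> space M"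
    by auto
  have "emeasure M (X -` {-\<epsilon>..\<epsilon>} \<inter> space M)
      = (\<integral>\<^sup>+x. ennreal (normal_density \<mu> \<sigma> x) * indicator {-\<epsilon>..\<epsilon>} x \<partial>lborel)"
    by (rule distributed_emeasure[OF X]) simp
  also have "\<dots> \<le> (\<integral>\<^sup>+x. ennreal (1 / (\<sigma> * sqrt (2 * pi))) * indicator {-\<epsilon>..\<epsilon>} x \<partial>lborel)"
    by (intro nn_integral_mono) (auto intro!: ennreal_leI normal_density_le \<sigma> split: split_indicator)
  also have "\<dots> = ennreal (2 * \<epsilon> / (\<sigma> * sqrt (2 * pi)))"
    using \<epsilon> \<sigma> by (simp add: nn_integral_cmult ennreal_mult'[symmetric])
  finally show ?thesis
    unfolding event using \<epsilon> \<sigma> by (simp add: emeasure_eq_measure)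
qed

lemma (in prob_space) prob_abs_gt_normal:
  assumes X: "distributed M lborel X (normal_density 0 \<sigma>)" and \<sigma>: "0 < \<sigma>" and L: "0 \<le> L"
  shows "prob {\<omega> \<in> space M. L < \<bar>X \<omega>\<bar>} \<le> sqrt 2 * exp (- L\<^sup>2 / (4 * \<sigma>\<^sup>2))"
proof -
  have event: "{\<omega> \<in> space M. L < \<bar>X \<omega>\<bar>} = X -` {x. L < \<bar>x\<bar>} \<inter> space M"
    by auto
  \<comment> \<open>On the tail the density is dominated by a multiple of the N(0, 2\<sigma>^2) density.\<close>
  have dominated: "normal_density 0 \<sigma> x * indicator {x. L < \<bar>x\<bar>} x
      \<le> sqrt 2 * exp (- L\<^sup>2 / (4 * \<sigma>\<^sup>2)) * normal_density 0 (sqrt 2 * \<sigma>) x" for x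
  proof (cases "L < \<bar>x\<bar>")
    case True
    have "L\<^sup>2 \<le> x\<^sup>2"
      using True L abs_le_square_iff[of L x] by simp
    then have "exp (- x\<^sup>2 / (4 * \<sigma>\<^sup>2)) \<le> exp (- L\<^sup>2 / (4 * \<sigma>\<^sup>2))"
      using \<sigma> by (simp add: divide_right_mono)
    then have "exp (- x\<^sup>2 / (2 * \<sigma>\<^sup>2)) \<le> exp (- L\<^sup>2 / (4 * \<sigma>\<^sup>2)) * exp (- x\<^sup>2 / (4 * \<sigma>\<^sup>2))"
      by (simp add: exp_add[symmetric] field_simps)
    moreover have "sqrt (2 * pi * (sqrt 2 * \<sigma>)\<^sup>2) = sqrt 2 * sqrt (2 * pi * \<sigma>\<^sup>2)"
      by (simp add: power_mult_distrib real_sqrt_mult)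
    ultimately show ?thesis
      using True \<sigma> unfolding normal_density_def by (simp add: field_simps power_mult_distrib)
  qed simp
  have "emeasure M (X -` {x. L < \<bar>x\<bar>} \<inter> space M)
      = (\<integral>\<^sup>+x. ennreal (normal_density 0 \<sigma> x) * indicator {x. L < \<bar>x\<bar>} x \<partial>lborel)"
    by (rule distributed_emeasure[OF X]) simp
  also have "\<dots> \<le> (\<integral>\<^sup>+x. ennreal (sqrt 2 * exp (- L\<^sup>2 / (4 * \<sigma>\<^sup>2)))
      * ennreal (normal_density 0 (sqrt 2 * \<sigma>) x) \<partial>lborel)"
    using dominated
    by (intro nn_integral_mono) (auto simp: ennreal_mult'[symmetric] ennreal_indicator[symmetric] ennreal_leI)
  also have "\<dots> = ennreal (sqrt 2 * exp (- L\<^sup>2 / (4 * \<sigma>\<^sup>2)))"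
    using \<sigma> by (simp add: nn_integral_cmult nn_integral_eq_integral)
  finally show ?thesis
    unfolding event by (simp add: emeasure_eq_measure)
qed

lemma (in prob_space) prob_ge_of_compl_subset:
  assumes "space M - (B1 \<union> B2) \<subseteq> S" "prob B1 \<le> p1" "prob B2 \<le> p2"
    and "B1 \<in> events" "B2 \<in> events" "S \<in> events"
  shows "1 - p1 - p2 \<le> prob S"
proof -
  have "1 - p1 - p2 \<le> 1 - prob (B1 \<union> B2)"
    using measure_subadditive[of B1 M B2] assms by (simp add: emeasure_eq_measure)
  also have "\<dots> = prob (space M - (B1 \<union> B2))"
    using prob_compl[of "B1 \<union> B2"] assms by simp
  also have "\<dots> \<le> prob S"
    using assms by (intro finite_measure_mono) auto
  finally show ?thesis .
qed

lemma (in product_prob_space) indep_vars_PiM_components: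
  "P.indep_vars M (\<lambda>i \<omega>. \<omega> i) I"
proof (cases "I = {}")
  case True
  show ?thesis
    unfolding P.indep_vars_def P.indep_sets_def using True by simp
next
  case False
  have "distr (PiM I M) (PiM I M) (\<lambda>\<omega>. \<lambda>i\<in>I. \<omega> i) = distr (PiM I M) (PiM I M) (\<lambda>\<omega>. \<omega>)"
    by (intro distr_cong) (auto simp: space_PiM PiE_def extensional_restrict)
  moreover have "PiM I (\<lambda>i. distr (PiM I M) (M i) (\<lambda>\<omega>. \<omega> i)) = PiM I M"
    by (intro PiM_cong) (simp_all add: PiM_component)
  ultimately show ?thesis
    using False by (subst P.indep_vars_iff_distr_eq_PiM') simp_all
qed

section \<open>Geometry of the augmented inputs\<close>

lemma sum_sq_xhat:
  "(\<Sum>k=1..i+1. (xhat i v k)\<^sup>2) = (\<Sum>l=1..i. (v l)\<^sup>2) + \<bar>1 - (\<Sum>l=1..i. (v l)\<^sup>2)\<bar>"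
proof -
  have "(\<Sum>k=1..i. (xhat i v k)\<^sup>2) = (\<Sum>l=1..i. (v l)\<^sup>2)"
    by (rule sum.cong) (auto simp: xhat_def)
  moreover have "(sqrt z)\<^sup>2 = \<bar>z\<bar>" for z
  proof (cases "0 \<le> z")
    case False
    have "sqrt z = - sqrt (- z)"
      by (simp add: real_sqrt_minus)
    then show ?thesis
      using False by simp
  qed simp
  ultimately show ?thesis
    by (simp add: xhat_def)
qed

lemma sum_sq_prefix_le:
  fixes v :: "nat \<Rightarrow> real"
  assumes "i \<le> d"
  shows "(\<Sum>l=1..i. (v l)\<^sup>2) \<le> (\<Sum>l=1..d. (v l)\<^sup>2)"
  using assms by (intro sum_mono2) auto

lemma sum_sq_xhat_eq_1:
  assumes "i \<le> d" "(\<Sum>l=1..d. (v l)\<^sup>2) \<le> 1"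
  shows "(\<Sum>k=1..i+1. (xhat i v k)\<^sup>2) = 1"
  using sum_sq_prefix_le[OF assms(1), of v] assms(2) unfolding sum_sq_xhat by simp

lemma coordinate_bounds:
  fixes v :: "nat \<Rightarrow> real"
  assumes "i \<in> {1..d}" "(\<Sum>l=1..d. (v l)\<^sup>2) \<le> 1"
  shows "-1 \<le> v i" "v i \<le> 1"
proof -
  have "(v i)\<^sup>2 \<le> (\<Sum>l=1..d. (v l)\<^sup>2)"
    using assms(1) by (intro member_le_sum) auto
  then have "(v i)\<^sup>2 \<le> 1"
    using assms(2) by linarith
  then have "\<bar>v i\<bar> \<le> 1"
    by (simp add: abs_square_le_1)
  then show "-1 \<le> v i" "v i \<le> 1"
    by auto
qed

lemma sum_sq_xhat_qpt_le:
  assumes i: "i \<in> {1..d}" and y: "(\<Sum>l=1..d. (y l)\<^sup>2) \<le> 1" and j: "j \<le> Q"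
  shows "(\<Sum>k=1..i+1. (xhat i (qpt Q i y j) k)\<^sup>2) \<le> 3 - 2 * (y i)\<^sup>2"
proof -
  define u where "u = -1 + real j * ((y i + 1) / real Q)"
  have yi: "-1 \<le> y i" "y i \<le> 1"
    using coordinate_bounds[OF i y] by auto
  have "real j / real Q \<le> 1"
    using j by (cases "Q = 0") auto
  then have "real j / real Q * (y i + 1) \<le> y i + 1"
    using yi by (intro mult_left_le_one_le) auto
  then have "real j * ((y i + 1) / real Q) \<le> y i + 1"
    by simp
  moreover have "0 \<le> real j * ((y i + 1) / real Q)"
    using yi by simp
  ultimately have "\<bar>u\<bar> \<le> 1"
    unfolding u_def using yi by (simp add: abs_le_iff)
  then have "u\<^sup>2 \<le> 1"
    by (simp add: abs_square_le_1)
  have "(\<Sum>l=1..i. ((y(i := u)) l)\<^sup>2) = (\<Sum>l=1..i. (y l)\<^sup>2) - (y i)\<^sup>2 + u\<^sup>2"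
  proof -
    have split: "(\<Sum>l=1..i. f l) = f i + (\<Sum>l\<in>{1..i}-{i}. f l)" for f :: "nat \<Rightarrow> real"
      using i by (intro sum.remove) auto
    show ?thesis
      using split[of "\<lambda>l. ((y(i := u)) l)\<^sup>2"] split[of "\<lambda>l. (y l)\<^sup>2"] by simp
  qed
  then have "(\<Sum>l=1..i. ((y(i := u)) l)\<^sup>2) \<le> 2 - (y i)\<^sup>2"
    using sum_sq_prefix_le[of i d y] i y \<open>u\<^sup>2 \<le> 1\<close> by auto
  moreover have "0 \<le> (\<Sum>l=1..i. ((y(i := u)) l)\<^sup>2)" "(y i)\<^sup>2 \<le> 1"
    using yi by (auto intro: sum_nonneg simp: abs_square_le_1)
  ultimately show ?thesis
    unfolding sum_sq_xhat qpt_def u_def[symmetric] by (auto simp: abs_if)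
qed

definition xhat_inner :: "nat \<Rightarrow> (nat \<Rightarrow> real) \<Rightarrow> (nat \<Rightarrow> real) \<Rightarrow> real" where
  "xhat_inner i x v = (\<Sum>k=1..i+1. xhat i v k * xhat i x k)"

lemma abs_xhat_inner_le:
  "\<bar>xhat_inner i x v\<bar> \<le> sqrt (\<Sum>k=1..i+1. (xhat i v k)\<^sup>2) * sqrt (\<Sum>k=1..i+1. (xhat i x k)\<^sup>2)"
  using sum_abs[of "\<lambda>k. xhat i v k * xhat i x k" "{1..i+1}"]
    L2_set_mult_ineq[where f = "xhat i v" and A = "{1..i+1}" and g = "xhat i x"]
  unfolding xhat_inner_def L2_set_def abs_mult by linarith

lemma abs_xhat_inner_le_1:
  assumes i: "i \<in> {1..d}" and x: "(\<Sum>l=1..d. (x l)\<^sup>2) \<le> 1" and y: "(\<Sum>l=1..d. (y l)\<^sup>2) \<le> 1"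
  shows "\<bar>xhat_inner i x y\<bar> \<le> 1"
  using abs_xhat_inner_le[of i x y] sum_sq_xhat_eq_1[OF _ x] sum_sq_xhat_eq_1[OF _ y] i by simp

lemma abs_xhat_inner_qpt_le:
  assumes i: "i \<in> {1..d}" and x: "(\<Sum>l=1..d. (x l)\<^sup>2) \<le> 1" and y: "(\<Sum>l=1..d. (y l)\<^sup>2) \<le> 1"
    and j: "j \<le> Q"
  shows "\<bar>xhat_inner i x (qpt Q i y j)\<bar> \<le> sqrt (3 - 2 * (y i)\<^sup>2)"
  using abs_xhat_inner_le[of i x "qpt Q i y j"] sum_sq_xhat_qpt_le[OF i y j] sum_sq_xhat_eq_1[OF _ x] i
  by (auto intro: order_trans real_sqrt_le_mono)

section \<open>Effect of the SGD steps on the pre-activations\<close>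

definition offset_preact :: "nat \<Rightarrow> offsets \<Rightarrow> nat \<Rightarrow> (nat \<Rightarrow> real) \<Rightarrow> real" where
  "offset_preact i th r x = (\<Sum>k=1..i+1. fst (th r) k * xhat i x k) + snd (th r)"

definition offset_preact_grad ::
    "nat \<Rightarrow> nat \<Rightarrow> (pid \<Rightarrow> real) \<Rightarrow> nat \<Rightarrow> offsets \<Rightarrow> (nat \<Rightarrow> real) \<Rightarrow> nat \<Rightarrow> (nat \<Rightarrow> real) \<Rightarrow> real" where
  "offset_preact_grad m Q \<omega> i th y r x =
     (\<Sum>k=1..i+1. grad_w m Q \<omega> i th y r k * xhat i x k) + grad_b m Q \<omega> i th y r"

lemma preact_eq_preact0_plus_offset:
  "preact \<omega> i th r x = preact0 \<omega> i r x + offset_preact i th r x"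
  unfolding preact_def preact0_def offset_preact_def by (simp add: distrib_right sum.distrib)

lemma offset_preact_sgd_Suc:
  "offset_preact i (sgd m Q \<eta> \<omega> i xs (Suc t)) r x
   = offset_preact i (sgd m Q \<eta> \<omega> i xs t) r x
     - \<eta> * offset_preact_grad m Q \<omega> i (sgd m Q \<eta> \<omega> i xs t) (xs t) r x"
  unfolding offset_preact_def offset_preact_grad_def
  by (simp add: left_diff_distrib sum_subtractf sum_distrib_left algebra_simps)

lemma offset_preact_grad_eq:
  "offset_preact_grad m Q \<omega> i th y r x = \<omega> (A i r) *
     ((y i + 1) / real Q * (\<Sum>j=1..Q. phi' (netN m \<omega> i th (qpt Q i y j))
          * relu' (preact \<omega> i th r (qpt Q i y j)) * (xhat_inner i x (qpt Q i y j) + 1))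
      - phi' (netN m \<omega> i th y) / phi (netN m \<omega> i th y) * relu' (preact \<omega> i th r y)
          * (xhat_inner i x y + 1))"
proof -
  define c where "c = (y i + 1) / real Q"
  define T where "T j = c * phi' (netN m \<omega> i th (qpt Q i y j)) * \<omega> (A i r)
      * relu' (preact \<omega> i th r (qpt Q i y j))" for j
  define U where "U = phi' (netN m \<omega> i th y) / phi (netN m \<omega> i th y) * \<omega> (A i r) * relu' (preact \<omega> i th r y)"
  have "(\<Sum>k=1..i+1. (\<Sum>j=1..Q. T j * xhat i (qpt Q i y j) k) * xhat i x k)
      = (\<Sum>j=1..Q. T j * xhat_inner i x (qpt Q i y j))"
    unfolding xhat_inner_def sum_distrib_left sum_distrib_right
    by (subst sum.swap) (simp add: mult.assoc)
  moreover have "(\<Sum>k=1..i+1. U * xhat i y k * xhat i x k) = U * xhat_inner i x y"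
    unfolding xhat_inner_def sum_distrib_left by (simp add: mult.assoc)
  ultimately have "offset_preact_grad m Q \<omega> i th y r x
      = (\<Sum>j=1..Q. T j * (xhat_inner i x (qpt Q i y j) + 1)) - U * (xhat_inner i x y + 1)"
    unfolding offset_preact_grad_def grad_w_def grad_b_def c_def[symmetric] T_def[symmetric] U_def[symmetric]
    by (simp add: left_diff_distrib sum_subtractf distrib_left sum.distrib algebra_simps)
  then show ?thesis
    unfolding T_def U_def c_def[symmetric] by (simp add: sum_distrib_left algebra_simps)
qed

lemma abs_offset_preact_grad_le:
  assumes i: "i \<in> {1..d}" and Q: "1 \<le> Q"
    and y: "(\<Sum>l=1..d. (y l)\<^sup>2) \<le> 1" and x: "(\<Sum>l=1..d. (x l)\<^sup>2) \<le> 1"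
  shows "\<bar>offset_preact_grad m Q \<omega> i th y r x\<bar> \<le> 9/2 * \<bar>\<omega> (A i r)\<bar>"
proof -
  define R where "R = sqrt (3 - 2 * (y i)\<^sup>2)"
  define w where "w j = phi' (netN m \<omega> i th (qpt Q i y j)) * relu' (preact \<omega> i th r (qpt Q i y j))" for j
  define c where "c = (y i + 1) / real Q"
  define S where "S = c * (\<Sum>j=1..Q. w j * (xhat_inner i x (qpt Q i y j) + 1))"
  define w0 where "w0 = phi' (netN m \<omega> i th y) / phi (netN m \<omega> i th y) * relu' (preact \<omega> i th r y)"
  define B where "B = w0 * (xhat_inner i x y + 1)"
  have yi: "-1 \<le> y i" "y i \<le> 1"
    using coordinate_bounds[OF i y] by auto
  then have R: "1 \<le> R"
    unfolding R_def by (simp add: abs_square_le_1)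
  have "\<bar>xhat_inner i x (qpt Q i y j)\<bar> \<le> R" if "j \<in> {1..Q}" for j
    unfolding R_def using abs_xhat_inner_qpt_le[OF i x y] that by simp
  moreover have "0 \<le> w j \<and> w j \<le> 1" for j
    unfolding w_def using phi'_bounds relu'_bounds by (simp add: mult_le_one)
  ultimately have sums: "real Q * (1 - R) \<le> (\<Sum>j=1..Q. w j * (xhat_inner i x (qpt Q i y j) + 1))"
      "(\<Sum>j=1..Q. w j * (xhat_inner i x (qpt Q i y j) + 1)) \<le> real Q * (R + 1)"
    using sum_weighted_shift_bounds[of "{1..Q}" w "\<lambda>j. xhat_inner i x (qpt Q i y j)" R] R by auto
  have c: "0 \<le> c" "c * real Q = y i + 1"
    unfolding c_def using yi Q by simp_all
  have S_bounds: "(y i + 1) * (1 - R) \<le> S" "S \<le> (y i + 1) * (R + 1)"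
    using mult_left_mono[OF sums(1) c(1)] mult_left_mono[OF sums(2) c(1)]
    unfolding S_def by (simp_all only: mult.assoc[symmetric] c(2))
  have "\<bar>xhat_inner i x y\<bar> \<le> 1"
    by (rule abs_xhat_inner_le_1[OF i x y])
  moreover have "0 \<le> w0" "w0 \<le> 1"
    unfolding w0_def
    by (rule mult_nonneg_nonneg[OF phi'_div_phi_bounds(1) relu'_bounds(1)],
        rule mult_le_one[OF phi'_div_phi_bounds(2) relu'_bounds])
  ultimately have "0 \<le> B \<and> B \<le> 2"
    unfolding B_def using mult_left_le_one_le[of "xhat_inner i x y + 1" w0] by (auto simp: abs_le_iff)
  then have "\<bar>S - B\<bar> \<le> 9/2"
    using quadrature_minus_log_term_bound[OF yi] S_bounds unfolding R_def by blast
  then have "\<bar>S - B\<bar> * \<bar>\<omega> (A i r)\<bar> \<le> 9/2 * \<bar>\<omega> (A i r)\<bar>"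
    by (rule mult_right_mono) simp
  moreover have "offset_preact_grad m Q \<omega> i th y r x = (S - B) * \<omega> (A i r)"
    unfolding offset_preact_grad_eq S_def B_def w_def w0_def c_def by (simp add: mult.assoc mult.commute)
  ultimately show ?thesis
    by (simp add: abs_mult)
qed

lemma abs_offset_preact_sgd_le:
  assumes i: "i \<in> {1..d}" and Q: "1 \<le> Q" and xs: "\<forall>s. (\<Sum>k=1..d. (xs s k)\<^sup>2) \<le> 1"
    and x: "(\<Sum>k=1..d. (x k)\<^sup>2) \<le> 1" and \<eta>: "0 < \<eta>"
  shows "\<bar>offset_preact i (sgd m Q \<eta> \<omega> i xs t) r x\<bar> \<le> 9/2 * \<eta> * real t * \<bar>\<omega> (A i r)\<bar>"
proof (induction t)
  case 0
  then show ?case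
    by (simp add: offset_preact_def)
next
  case (Suc t)
  have "\<bar>\<eta> * offset_preact_grad m Q \<omega> i (sgd m Q \<eta> \<omega> i xs t) (xs t) r x\<bar> \<le> \<eta> * (9/2 * \<bar>\<omega> (A i r)\<bar>)"
    using abs_offset_preact_grad_le[OF i Q _ x] xs \<eta> by (simp add: abs_mult mult_left_mono)
  moreover have "9/2 * \<eta> * real (Suc t) * \<bar>\<omega> (A i r)\<bar>
      = 9/2 * \<eta> * real t * \<bar>\<omega> (A i r)\<bar> + \<eta> * (9/2 * \<bar>\<omega> (A i r)\<bar>)"
    by (simp add: algebra_simps)
  ultimately show ?case
    using Suc.IH abs_triangle_ineq4 unfolding offset_preact_sgd_Suc by (smt (verit))
qed

section \<open>Network versus pseudo-network\<close>

definition kink_indicator :: "real \<Rightarrow> nat \<Rightarrow> (nat \<Rightarrow> real) \<Rightarrow> nat \<Rightarrow> (pid \<Rightarrow> real) \<Rightarrow> real" where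
  "kink_indicator \<epsilon> i x r \<omega> = (if \<bar>preact0 \<omega> i r x\<bar> \<le> \<epsilon> then 1 else 0)"

lemma neuron_linearization_error:
  fixes a z D E L :: real
  assumes a: "\<bar>a\<bar> \<le> L" and D: "\<bar>D\<bar> \<le> E * \<bar>a\<bar>" and E: "0 \<le> E"
  shows "\<bar>a * (relu (z + D) - relu' z * (z + D))\<bar> \<le> E * L\<^sup>2 * (if \<bar>z\<bar> \<le> E * L then 1 else 0)"
proof -
  have DL: "\<bar>D\<bar> \<le> E * L"
    using D a E by (meson mult_left_mono order_trans)
  have "\<bar>a * (relu (z + D) - relu' z * (z + D))\<bar> \<le> \<bar>a\<bar> * (if \<bar>z\<bar> \<le> \<bar>D\<bar> then \<bar>D\<bar> else 0)"
    unfolding abs_mult by (intro mult_left_mono relu_linearization_error) simp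
  also have "\<dots> \<le> E * L\<^sup>2 * (if \<bar>z\<bar> \<le> E * L then 1 else 0)"
  proof (cases "\<bar>z\<bar> \<le> \<bar>D\<bar>")
    case True
    have "\<bar>a\<bar> * \<bar>D\<bar> \<le> L * (E * L)"
      using a DL by (intro mult_mono) auto
    then show ?thesis
      using True DL by (simp add: power2_eq_square algebra_simps)
  qed (use a E in simp)
  finally show ?thesis .
qed

lemma abs_netN_minus_netP_le:
  assumes a: "\<forall>r\<in>{1..m}. \<bar>\<omega> (A i r)\<bar> \<le> L"
    and D: "\<forall>r\<in>{1..m}. \<bar>offset_preact i th r x\<bar> \<le> E * \<bar>\<omega> (A i r)\<bar>" and E: "0 \<le> E"
  shows "\<bar>netN m \<omega> i th x - netP m \<omega> i th x\<bar>
     \<le> E * L\<^sup>2 * (\<Sum>r=1..m. kink_indicator (E * L) i x r \<omega>)"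
proof -
  have "\<bar>netN m \<omega> i th x - netP m \<omega> i th x\<bar>
      = \<bar>\<Sum>r=1..m. \<omega> (A i r) * (relu (preact0 \<omega> i r x + offset_preact i th r x)
          - relu' (preact0 \<omega> i r x) * (preact0 \<omega> i r x + offset_preact i th r x))\<bar>"
    unfolding netN_def netP_def preact_eq_preact0_plus_offset
    by (simp add: sum_subtractf[symmetric] algebra_simps)
  also have "\<dots> \<le> (\<Sum>r=1..m. E * L\<^sup>2 * kink_indicator (E * L) i x r \<omega>)"
    unfolding kink_indicator_def using a D E
    by (intro order_trans[OF sum_abs] sum_mono neuron_linearization_error) auto
  finally show ?thesis
    by (simp add: sum_distrib_left)
qed

lemma abs_netN_minus_netP_sgd_le:
  assumes i: "i \<in> {1..d}" and Q: "1 \<le> Q" and xs: "\<forall>s. (\<Sum>k=1..d. (xs s k)\<^sup>2) \<le> 1"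
    and x: "(\<Sum>k=1..d. (x k)\<^sup>2) \<le> 1" and \<eta>: "0 < \<eta>" and a: "\<forall>r\<in>{1..m}. \<bar>\<omega> (A i r)\<bar> \<le> L"
  shows "\<bar>netN m \<omega> i (sgd m Q \<eta> \<omega> i xs t) x - netP m \<omega> i (sgd m Q \<eta> \<omega> i xs t) x\<bar>
     \<le> 9/2 * \<eta> * real t * L\<^sup>2 * (\<Sum>r=1..m. kink_indicator (9/2 * \<eta> * real t * L) i x r \<omega>)"
  using abs_offset_preact_sgd_le[OF i Q xs x \<eta>] \<eta> by (intro abs_netN_minus_netP_le[OF a]) auto

section \<open>The random initialization\<close>

definition init_component :: "nat \<Rightarrow> real \<Rightarrow> pid \<Rightarrow> real measure" where
  "init_component m eps_a j = density lborel (normal_density 0 (init_sd m eps_a j))"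

lemma init_measure_eq_PiM: "init_measure d m eps_a = PiM (init_index d m) (init_component m eps_a)"
  unfolding init_measure_def init_component_def by simp

lemma sets_init_component [simp, measurable_cong]: "sets (init_component m eps_a j) = sets borel"
  by (simp add: init_component_def)

lemma measurable_init_coordinate [measurable]:
  "(\<lambda>\<omega>. \<omega> j) \<in> borel_measurable (init_measure d m eps_a)"
proof (cases "j \<in> init_index d m")
  case True
  then show ?thesis
    unfolding init_measure_eq_PiM
    using measurable_component_singleton[OF True, of "init_component m eps_a"] by simp
next
  case False
  \<comment> \<open>outside the index set every point of the product space takes the value undefined\<close>
  have "(\<lambda>\<omega>. undefined) \<in> borel_measurable (init_measure d m eps_a)"
    by simp
  then show ?thesis
    by (rule measurable_cong[THEN iffD1, rotated])
       (use False in \<open>auto simp: init_measure_eq_PiM space_PiM PiE_def extensional_def\<close>)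
qed

lemma measurable_relu [measurable]: "relu \<in> borel_measurable borel"
  unfolding relu_def[abs_def] by measurable

lemma measurable_relu' [measurable]: "relu' \<in> borel_measurable borel"
  unfolding relu'_def[abs_def] by measurable

lemma measurable_phi [measurable]: "phi \<in> borel_measurable borel"
  unfolding phi_def[abs_def] by measurable

lemma measurable_phi' [measurable]: "phi' \<in> borel_measurable borel"
  unfolding phi'_def[abs_def] by measurable

lemma measurable_preact0 [measurable]:
  "(\<lambda>\<omega>. preact0 \<omega> i r x) \<in> borel_measurable (init_measure d m eps_a)"
  unfolding preact0_def by measurable

lemma measurable_kink_indicator [measurable]:
  "kink_indicator \<epsilon> i x r \<in> borel_measurable (init_measure d m eps_a)"
  unfolding kink_indicator_def[abs_def] by measurable

lemma measurable_sgd: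
  "(\<lambda>\<omega>. fst (sgd m Q \<eta> \<omega> i xs t r) k) \<in> borel_measurable (init_measure d m eps_a) \<and>
   (\<lambda>\<omega>. snd (sgd m Q \<eta> \<omega> i xs t r)) \<in> borel_measurable (init_measure d m eps_a)"
proof (induction t arbitrary: r k)
  case 0
  then show ?case
    by simp
next
  case (Suc t)
  note [measurable] = Suc.IH[THEN conjunct1] Suc.IH[THEN conjunct2]
  have [measurable]: "(\<lambda>\<omega>. preact \<omega> i (sgd m Q \<eta> \<omega> i xs t) r' q) \<in> borel_measurable (init_measure d m eps_a)"
    for r' q
    unfolding preact_def by measurable
  have [measurable]: "(\<lambda>\<omega>. netN m \<omega> i (sgd m Q \<eta> \<omega> i xs t) q) \<in> borel_measurable (init_measure d m eps_a)"
    for q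
    unfolding netN_def by measurable
  show ?case
    unfolding sgd.simps grad_w_def grad_b_def by simp
qed

lemma measurable_netN_netP_sgd [measurable]:
  "(\<lambda>\<omega>. netN m \<omega> i (sgd m Q \<eta> \<omega> i xs t) x) \<in> borel_measurable (init_measure d m eps_a)"
  "(\<lambda>\<omega>. netP m \<omega> i (sgd m Q \<eta> \<omega> i xs t) x) \<in> borel_measurable (init_measure d m eps_a)"
proof -
  note [measurable] = measurable_sgd[THEN conjunct1] measurable_sgd[THEN conjunct2]
  have [measurable]: "(\<lambda>\<omega>. preact \<omega> i (sgd m Q \<eta> \<omega> i xs t) r x) \<in> borel_measurable (init_measure d m eps_a)"
    for r
    unfolding preact_def by measurable
  show "(\<lambda>\<omega>. netN m \<omega> i (sgd m Q \<eta> \<omega> i xs t) x) \<in> borel_measurable (init_measure d m eps_a)"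
    unfolding netN_def by measurable
  show "(\<lambda>\<omega>. netP m \<omega> i (sgd m Q \<eta> \<omega> i xs t) x) \<in> borel_measurable (init_measure d m eps_a)"
    unfolding netP_def by measurable
qed

locale gaussian_init =
  fixes d m :: nat and eps_a :: real
  assumes m_pos: "1 \<le> m" and eps_a_pos: "0 < eps_a"
begin

lemma init_sd_pos: "0 < init_sd m eps_a j"
  using m_pos eps_a_pos by (auto simp: init_sd_def split: pid.split)

lemma product_prob_space_init_component:
  "product_prob_space (init_component m eps_a)"
  using prob_space_normal_density[OF init_sd_pos] prob_space_imp_sigma_finite
  unfolding product_prob_space_def product_prob_space_axioms_def product_sigma_finite_def
    init_component_def
  by blast

sublocale prob_space "init_measure d m eps_a"
  unfolding init_measure_eq_PiM init_component_def
  by (intro prob_space_PiM prob_space_normal_density init_sd_pos)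

lemma distributed_init_coordinate:
  assumes "j \<in> init_index d m"
  shows "distributed (init_measure d m eps_a) lborel (\<lambda>\<omega>. \<omega> j) (normal_density 0 (init_sd m eps_a j))"
proof -
  interpret C: product_prob_space "init_component m eps_a" "init_index d m"
    by (rule product_prob_space_init_component)
  have "distr (init_measure d m eps_a) lborel (\<lambda>\<omega>. \<omega> j)
      = distr (PiM (init_index d m) (init_component m eps_a)) (init_component m eps_a j) (\<lambda>\<omega>. \<omega> j)"
    by (rule distr_cong) (simp_all add: init_measure_eq_PiM)
  also have "\<dots> = init_component m eps_a j"
    using C.PiM_component assms by blast
  finally show ?thesis
    unfolding distributed_def init_component_def using measurable_lborel1 by simp
qed

lemma indep_init_coordinates:
  "indep_vars (init_component m eps_a) (\<lambda>j \<omega>. \<omega> j) (init_index d m)"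
proof -
  interpret C: product_prob_space "init_component m eps_a" "init_index d m"
    by (rule product_prob_space_init_component)
  show ?thesis
    using C.indep_vars_PiM_components unfolding init_measure_eq_PiM .
qed

text \<open>The initial pre-activation is a combination of independent N(0, 1/m) weights with
  coefficients the coordinates of (xhat x, 1), a vector of squared norm 2.\<close>

lemma distributed_preact0:
  assumes i: "i \<in> {1..d}" and r: "r \<in> {1..m}" and x: "(\<Sum>l=1..d. (x l)\<^sup>2) \<le> 1"
  shows "distributed (init_measure d m eps_a) lborel (\<lambda>\<omega>. preact0 \<omega> i r x)
    (normal_density 0 (sqrt (2 / real m)))"
proof -
  \<comment> \<open>coordinates with coefficient 0 are dropped: sum_indep_normal needs positive deviations\<close>
  define J where "J = {k \<in> {1..i+1}. xhat i x k \<noteq> 0}"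
  define I where "I = insert (Bb i r) (Wb i r ` J)"
  define coef where "coef j = (case j of Wb _ _ k \<Rightarrow> xhat i x k | _ \<Rightarrow> 1)" for j
  have I: "finite I" "I \<subseteq> init_index d m"
    unfolding I_def J_def init_index_def using i r by auto
  have coef: "coef j \<noteq> 0" and sd: "init_sd m eps_a j = 1 / sqrt (real m)" if "j \<in> I" for j
    using that unfolding I_def J_def coef_def init_sd_def by auto
  have "indep_vars (\<lambda>_. borel) (\<lambda>j \<omega>. coef j * \<omega> j) I"
    by (rule indep_vars_compose2[OF indep_vars_subset[OF indep_init_coordinates I(2)],
          of "\<lambda>j v. coef j * v", simplified])
       (simp add: measurable_cong_sets[OF sets_init_component refl])
  moreover have "distributed (init_measure d m eps_a) lborel (\<lambda>\<omega>. coef j * \<omega> j)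
      (normal_density 0 (\<bar>coef j\<bar> * (1 / sqrt (real m))))" if "j \<in> I" for j
    using normal_density_affine[OF distributed_init_coordinate[OF subsetD[OF I(2) that]] init_sd_pos
        coef[OF that], where \<beta> = 0] sd[OF that] by simp
  ultimately have normal: "distributed (init_measure d m eps_a) lborel (\<lambda>\<omega>. \<Sum>j\<in>I. coef j * \<omega> j)
      (normal_density (\<Sum>j\<in>I. 0) (sqrt (\<Sum>j\<in>I. (\<bar>coef j\<bar> * (1 / sqrt (real m)))\<^sup>2)))"
    using coef m_pos I(1) by (intro sum_indep_normal) (auto simp: I_def)
  have split_I: "(\<Sum>j\<in>I. f j) = f (Bb i r) + (\<Sum>k\<in>J. f (Wb i r k))" for f :: "pid \<Rightarrow> real"
    unfolding I_def using J_def by (subst sum.insert) (auto simp: sum.reindex inj_on_def)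
  have drop_zeros: "(\<Sum>k\<in>J. xhat i x k * g k) = (\<Sum>k=1..i+1. g k * xhat i x k)" for g
    by (subst mult.commute, rule sum.mono_neutral_left) (auto simp: J_def)
  have "(\<lambda>\<omega>. \<Sum>j\<in>I. coef j * \<omega> j) = (\<lambda>\<omega>. preact0 \<omega> i r x)"
    unfolding split_I preact0_def by (simp add: coef_def drop_zeros add.commute)
  moreover have "(\<Sum>j\<in>I. (\<bar>coef j\<bar> * (1 / sqrt (real m)))\<^sup>2) = 2 / real m"
  proof -
    have "(\<Sum>k\<in>J. (xhat i x k)\<^sup>2) = 1"
      using drop_zeros[of "xhat i x"] sum_sq_xhat_eq_1[OF _ x] i by (simp add: power2_eq_square)
    then have "(\<Sum>j\<in>I. (coef j)\<^sup>2) = 2"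
      unfolding split_I by (simp add: coef_def)
    then show ?thesis
      using m_pos by (simp add: power_mult_distrib power_divide sum_divide_distrib[symmetric])
  qed
  ultimately show ?thesis
    using normal by simp
qed

lemma prob_abs_preact0_le:
  assumes i: "i \<in> {1..d}" and r: "r \<in> {1..m}" and x: "(\<Sum>l=1..d. (x l)\<^sup>2) \<le> 1" and \<epsilon>: "0 \<le> \<epsilon>"
  shows "prob {\<omega> \<in> space (init_measure d m eps_a). \<bar>preact0 \<omega> i r x\<bar> \<le> \<epsilon>} \<le> \<epsilon> * sqrt (real m) / sqrt pi"
proof -
  have "sqrt (2 / real m) * sqrt (2 * pi) = sqrt (4 * pi / real m)"
    by (simp add: real_sqrt_mult[symmetric])
  also have "\<dots> = 2 * sqrt pi / sqrt (real m)"
    by (simp add: real_sqrt_divide real_sqrt_mult)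
  finally have "sqrt (2 / real m) * sqrt (2 * pi) = 2 * sqrt pi / sqrt (real m)" .
  then show ?thesis
    using prob_abs_le_normal[OF distributed_preact0[OF i r x] _ \<epsilon>] m_pos by simp
qed

lemma indep_kink_indicators:
  assumes i: "i \<in> {1..d}"
  shows "indep_vars (\<lambda>_. borel) (\<lambda>r. kink_indicator \<epsilon> i x r) {1..m}"
proof -
  \<comment> \<open>the indicators depend on the disjoint blocks K r of independent coordinates\<close>
  define K where "K r = insert (Bb i r) (Wb i r ` {1..i+1})" for r
  define Y where "Y r f = (if \<bar>(\<Sum>k=1..i+1. f (Wb i r k) * xhat i x k) + f (Bb i r)\<bar> \<le> \<epsilon> then 1 else 0::real)"
    for r and f :: "pid \<Rightarrow> real"
  have "indep_vars (\<lambda>r. PiM (K r) (init_component m eps_a)) (\<lambda>r \<omega>. restrict (\<lambda>j. \<omega> j) (K r)) {1..m}"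
    using i by (intro indep_vars_restrict[OF indep_init_coordinates])
      (auto simp: K_def init_index_def disjoint_family_on_def)
  moreover have "Y r \<in> borel_measurable (PiM (K r) (init_component m eps_a))" for r
  proof -
    have component: "(\<lambda>f. f j) \<in> borel_measurable (PiM (K r) (init_component m eps_a))" if "j \<in> K r" for j
      using measurable_component_singleton[OF that, of "init_component m eps_a"]
      by (simp add: measurable_cong_sets[OF refl sets_init_component])
    have [measurable]: "(\<lambda>f. \<Sum>k=1..i+1. f (Wb i r k) * xhat i x k) \<in> borel_measurable (PiM (K r) (init_component m eps_a))"
      by (intro borel_measurable_sum borel_measurable_times component borel_measurable_const) (auto simp: K_def)
    have [measurable]: "(\<lambda>f. f (Bb i r)) \<in> borel_measurable (PiM (K r) (init_component m eps_a))"
      by (rule component) (simp add: K_def)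
    show ?thesis
      unfolding Y_def[abs_def] by measurable
  qed
  ultimately have "indep_vars (\<lambda>_. borel) (\<lambda>r \<omega>. Y r (restrict (\<lambda>j. \<omega> j) (K r))) {1..m}"
    by (rule indep_vars_compose2)
  moreover have "(\<lambda>\<omega>. Y r (restrict (\<lambda>j. \<omega> j) (K r))) = kink_indicator \<epsilon> i x r" for r
    by (simp add: fun_eq_iff Y_def kink_indicator_def preact0_def K_def)
  ultimately show ?thesis
    by simp
qed

lemma prob_many_kinks_le:
  assumes i: "i \<in> {1..d}" and x: "(\<Sum>l=1..d. (x l)\<^sup>2) \<le> 1" and \<epsilon>: "0 \<le> \<epsilon>" and s: "0 \<le> s"
  shows "prob {\<omega> \<in> space (init_measure d m eps_a).
      real m * (\<epsilon> * sqrt (real m) / sqrt pi) + s \<le> (\<Sum>r=1..m. kink_indicator \<epsilon> i x r \<omega>)}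
    \<le> exp (- 2 * s\<^sup>2 / real m)"
proof -
  interpret Hoeffding_ineq "init_measure d m eps_a" "{1..m}" "\<lambda>r. kink_indicator \<epsilon> i x r" "\<lambda>_. 0" "\<lambda>_. 1"
    "\<Sum>r\<in>{1..m}. expectation (kink_indicator \<epsilon> i x r)"
    by unfold_locales (use indep_kink_indicators[OF i] in \<open>auto simp: kink_indicator_def\<close>)
  have "expectation (kink_indicator \<epsilon> i x r) \<le> \<epsilon> * sqrt (real m) / sqrt pi" if r: "r \<in> {1..m}" for r
  proof -
    define K where "K = {\<omega> \<in> space (init_measure d m eps_a). \<bar>preact0 \<omega> i r x\<bar> \<le> \<epsilon>}"
    have "expectation (kink_indicator \<epsilon> i x r) = expectation (indicator K)"
      by (rule Bochner_Integration.integral_cong) (auto simp: kink_indicator_def K_def)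
    also have "\<dots> = prob K"
      by (simp add: K_def Int_absorb2)
    finally show ?thesis
      using prob_abs_preact0_le[OF i r x \<epsilon>] unfolding K_def by simp
  qed
  then have "(\<Sum>r\<in>{1..m}. expectation (kink_indicator \<epsilon> i x r)) \<le> (\<Sum>r\<in>{1..m}. \<epsilon> * sqrt (real m) / sqrt pi)"
    by (rule sum_mono)
  then have "prob {\<omega> \<in> space (init_measure d m eps_a).
      real m * (\<epsilon> * sqrt (real m) / sqrt pi) + s \<le> (\<Sum>r=1..m. kink_indicator \<epsilon> i x r \<omega>)}
    \<le> prob {\<omega> \<in> space (init_measure d m eps_a).
      (\<Sum>r\<in>{1..m}. kink_indicator \<epsilon> i x r \<omega>) \<ge> (\<Sum>r\<in>{1..m}. expectation (kink_indicator \<epsilon> i x r)) + s}"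
    by (intro finite_measure_mono) auto
  also have "\<dots> \<le> exp (- 2 * s\<^sup>2 / (\<Sum>r\<in>{1..m}. (1 - 0)\<^sup>2))"
    by (rule Hoeffding_ineq_ge[OF s]) (use m_pos in simp)
  finally show ?thesis
    by simp
qed

lemma prob_large_output_weight_le:
  assumes i: "i \<in> {1..d}" and L: "0 \<le> L"
  shows "prob {\<omega> \<in> space (init_measure d m eps_a). \<exists>r\<in>{1..m}. L < \<bar>\<omega> (A i r)\<bar>}
    \<le> real m * (sqrt 2 * exp (- L\<^sup>2 / (4 * eps_a\<^sup>2)))"
proof -
  have "prob {\<omega> \<in> space (init_measure d m eps_a). \<exists>r\<in>{1..m}. L < \<bar>\<omega> (A i r)\<bar>}
      \<le> (\<Sum>r\<in>{1..m}. prob {\<omega> \<in> space (init_measure d m eps_a). L < \<bar>\<omega> (A i r)\<bar>})"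
  proof -
    have "{\<omega> \<in> space (init_measure d m eps_a). \<exists>r\<in>{1..m}. L < \<bar>\<omega> (A i r)\<bar>}
        = (\<Union>r\<in>{1..m}. {\<omega> \<in> space (init_measure d m eps_a). L < \<bar>\<omega> (A i r)\<bar>})"
      by auto
    moreover have "{\<omega> \<in> space (init_measure d m eps_a). L < \<bar>\<omega> (A i r)\<bar>} \<in> events" for r
      by measurable
    ultimately show ?thesis
      by (auto intro: finite_measure_subadditive_finite)
  qed
  also have "\<dots> \<le> (\<Sum>r\<in>{1..m}. sqrt 2 * exp (- L\<^sup>2 / (4 * eps_a\<^sup>2)))"
  proof (rule sum_mono)
    fix r assume "r \<in> {1..m}"
    then have "distributed (init_measure d m eps_a) lborel (\<lambda>\<omega>. \<omega> (A i r)) (normal_density 0 eps_a)"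
      using distributed_init_coordinate[of "A i r"] i by (simp add: init_index_def init_sd_def)
    then show "prob {\<omega> \<in> space (init_measure d m eps_a). L < \<bar>\<omega> (A i r)\<bar>} \<le> sqrt 2 * exp (- L\<^sup>2 / (4 * eps_a\<^sup>2))"
      using prob_abs_gt_normal eps_a_pos L by blast
  qed
  finally show ?thesis
    by simp
qed

end

section \<open>Arithmetic of the constants\<close>

lemma ln_ge_half:
  fixes x :: real
  assumes "2 \<le> x"
  shows "1/2 \<le> ln x"
proof -
  have "1/2 \<le> ln (2::real)"
    using ln_le_minus_one[of "1/2"] by (simp add: ln_div)
  also have "\<dots> \<le> ln x"
    using assms by simp
  finally show ?thesis .
qed

lemma weight_tail_bound:
  fixes m c1 eps_a :: real
  assumes m: "2 \<le> m" and c1: "10 < c1" and e: "0 < eps_a"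
  shows "m * (sqrt 2 * exp (- (6 * c1 * eps_a * sqrt (2 * ln m))\<^sup>2 / (4 * eps_a\<^sup>2))) \<le> 1 / c1"
proof -
  have lm: "1/2 \<le> ln m"
    using ln_ge_half m by blast
  have exponent: "- (6 * c1 * eps_a * sqrt (2 * ln m))\<^sup>2 / (4 * eps_a\<^sup>2) = - (18 * c1\<^sup>2 * ln m)"
    using lm e by (simp add: power_mult_distrib field_simps)
  have "sqrt 2 \<le> 3/2"
    by (rule real_le_lsqrt) (auto simp: power2_eq_square)
  moreover have "ln (sqrt 2) < sqrt 2"
    by (rule ln_less_self) simp
  ultimately have "ln (sqrt 2) < 3/2"
    by linarith
  moreover have "ln c1 < c1"
    using c1 by (intro ln_less_self) simp
  moreover have "ln (m * sqrt 2 * c1) = ln m + ln (sqrt 2) + ln c1"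
    using m c1 by (simp add: ln_mult)
  ultimately have "ln (m * sqrt 2 * c1) \<le> ln m + 2 * c1"
    using c1 by linarith
  also have "\<dots> \<le> 18 * c1\<^sup>2 * ln m"
  proof -
    have c1_sq: "10 * c1 \<le> c1\<^sup>2"
      using c1 by (simp add: power2_eq_square)
    then have "2 * c1 \<le> (18 * c1\<^sup>2 - 1) * (1/2)"
      using c1 by simp
    also have "\<dots> \<le> (18 * c1\<^sup>2 - 1) * ln m"
      using lm c1 c1_sq by (intro mult_left_mono) auto
    finally show ?thesis
      by (simp add: algebra_simps)
  qed
  finally have "exp (ln (m * sqrt 2 * c1)) \<le> exp (18 * c1\<^sup>2 * ln m)"
    by simp
  then have "m * sqrt 2 * c1 \<le> exp (18 * c1\<^sup>2 * ln m)"
    using m c1 by simp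
  then show ?thesis
    unfolding exponent using c1 by (simp add: exp_minus field_simps)
qed

lemma linearization_bound_arith:
  fixes m \<eta> t c1 c4 eps_a L :: real
  assumes m: "2 \<le> m" and c1: "0 < c1" and c4: "1 \<le> c4" and e: "0 < eps_a"
    and L: "L = 6 * c1 * eps_a * sqrt (2 * ln m)"
  shows "9/2 * \<eta> * t * L\<^sup>2 * (m * (9/2 * \<eta> * t * L * sqrt m / sqrt pi)
          + 4 * (c4 - 1) * m * sqrt m * \<eta> * t * L / sqrt pi)
     \<le> 192 * \<eta>\<^sup>2 * m powr 1.5 * L\<^sup>2 * c1 * c4 * eps_a * t\<^sup>2 * sqrt (ln m) / sqrt pi"
proof -
  define W where "W = \<eta>\<^sup>2 * t\<^sup>2 * m * sqrt m * L\<^sup>2 / sqrt pi"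
  define q where "q = c1 * eps_a * sqrt (ln m)"
  have W: "0 \<le> W"
    unfolding W_def using m by simp
  have q: "0 \<le> q"
    unfolding q_def using c1 e m by simp
  have Lq: "L = 6 * sqrt 2 * q"
    unfolding L q_def by (simp add: real_sqrt_mult)
  have "m powr 1.5 = m powr (1 + 1/2)"
    by simp
  also have "\<dots> = m powr 1 * m powr (1/2)"
    by (rule powr_add)
  also have "\<dots> = m * sqrt m"
    using m by (simp add: powr_half_sqrt)
  finally have m_powr: "m powr 1.5 = m * sqrt m" .
  have "sqrt 2 \<le> 3/2"
    by (rule real_le_lsqrt) (auto simp: power2_eq_square)
  then have "27 * sqrt 2 * (4 * c4 + 1/2) * q \<le> 27 * (3/2) * (4 * c4 + 1/2) * q"
    using c4 q by (intro mult_right_mono) auto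
  then have "9/2 * L * (4 * c4 + 1/2) \<le> 27 * (3/2) * (4 * c4 + 1/2) * q"
    unfolding Lq by (simp add: algebra_simps)
  also have "\<dots> \<le> 192 * c4 * q"
    using c4 q by (intro mult_right_mono) auto
  finally have "W * (9/2 * L * (4 * c4 + 1/2)) \<le> W * (192 * c4 * q)"
    using W by (rule mult_left_mono)
  then show ?thesis
    unfolding W_def q_def m_powr by (simp add: field_simps power2_eq_square)
qed

lemma hoeffding_exponent_eq:
  fixes m \<eta> t c4 L :: real
  assumes "0 < m"
  shows "2 * (4 * (c4 - 1) * m * sqrt m * \<eta> * t * L / sqrt pi)\<^sup>2 / m
    = 32 * (c4 - 1)\<^sup>2 * \<eta>\<^sup>2 * m\<^sup>2 * L\<^sup>2 * t\<^sup>2 / pi"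
  unfolding power_mult_distrib power_divide using assms by (simp add: field_simps)

lemma abs_netN_minus_netP_sgd_bound:
  assumes m: "2 \<le> m" and e: "0 < eps_a" and Q: "1 \<le> Q" and \<eta>: "0 < \<eta>"
    and xs: "\<forall>s. (\<Sum>k=1..d. (xs s k)\<^sup>2) \<le> 1" and i: "i \<in> {1..d}" and x: "(\<Sum>k=1..d. (x k)\<^sup>2) \<le> 1"
    and c1: "0 < c1" and c4: "1 \<le> c4" and \<Lambda>: "\<Lambda> = 6 * c1 * eps_a * sqrt (2 * ln (real m))"
    and a: "\<forall>r\<in>{1..m}. \<bar>\<omega> (A i r)\<bar> \<le> \<Lambda>"
    and kinks: "(\<Sum>r=1..m. kink_indicator (9/2 * \<eta> * real t * \<Lambda>) i x r \<omega>)
      < real m * (9/2 * \<eta> * real t * \<Lambda> * sqrt (real m) / sqrt pi)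
        + 4 * (c4 - 1) * real m * sqrt (real m) * \<eta> * real t * \<Lambda> / sqrt pi"
  shows "\<bar>netN m \<omega> i (sgd m Q \<eta> \<omega> i xs t) x - netP m \<omega> i (sgd m Q \<eta> \<omega> i xs t) x\<bar>
    \<le> 192 * \<eta>\<^sup>2 * real m powr 1.5 * \<Lambda>\<^sup>2 * c1 * c4 * eps_a * (real t)\<^sup>2 * sqrt (ln (real m)) / sqrt pi"
proof -
  have "\<bar>netN m \<omega> i (sgd m Q \<eta> \<omega> i xs t) x - netP m \<omega> i (sgd m Q \<eta> \<omega> i xs t) x\<bar>
      \<le> 9/2 * \<eta> * real t * \<Lambda>\<^sup>2 * (\<Sum>r=1..m. kink_indicator (9/2 * \<eta> * real t * \<Lambda>) i x r \<omega>)"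
    by (rule abs_netN_minus_netP_sgd_le[OF i Q xs x \<eta> a])
  also have "\<dots> \<le> 9/2 * \<eta> * real t * \<Lambda>\<^sup>2 * (real m * (9/2 * \<eta> * real t * \<Lambda> * sqrt (real m) / sqrt pi)
        + 4 * (c4 - 1) * real m * sqrt (real m) * \<eta> * real t * \<Lambda> / sqrt pi)"
    using kinks \<eta> by (intro mult_left_mono) auto
  also have "\<dots> \<le> 192 * \<eta>\<^sup>2 * real m powr 1.5 * \<Lambda>\<^sup>2 * c1 * c4 * eps_a * (real t)\<^sup>2 * sqrt (ln (real m)) / sqrt pi"
    using m by (intro linearization_bound_arith[OF _ c1 c4 e \<Lambda>]) auto
  finally show ?thesis .
qed

theorem lemma4:
  fixes d m Q :: nat and eps_a \<eta> c1 c4 :: real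
    and xs :: "nat \<Rightarrow> nat \<Rightarrow> real" and x :: "nat \<Rightarrow> real" and i t :: nat
  assumes "d \<ge> 1" and "m \<ge> 2" and "eps_a > 0" and "Q \<ge> 1" and "\<eta> > 0"
    and "\<forall>s. (\<Sum>k=1..d. (xs s k)\<^sup>2) \<le> 1"
    and "i \<in> {1..d}" and "(\<Sum>k=1..d. (x k)\<^sup>2) \<le> 1" and "t \<ge> 1"
    and "c1 > 10" and "c4 \<ge> 1"
  shows "let \<Lambda> = 6 * c1 * eps_a * sqrt (2 * ln (real m)) in
         measure (init_measure d m eps_a)
           {\<omega> \<in> space (init_measure d m eps_a).
              let Nv = netN m \<omega> i (sgd m Q \<eta> \<omega> i xs t) x;
                  Pv = netP m \<omega> i (sgd m Q \<eta> \<omega> i xs t) x in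
              \<bar>phi Nv - phi Pv\<bar> \<le> \<bar>Nv - Pv\<bar> \<and>
              \<bar>Nv - Pv\<bar> \<le> 192 * \<eta>\<^sup>2 * real m powr 1.5 * \<Lambda>\<^sup>2 * c1 * c4 * eps_a * (real t)\<^sup>2
                              * sqrt (ln (real m)) / sqrt pi}
         \<ge> 1 - 1 / c1 - exp (- (32 * (c4 - 1)\<^sup>2 * \<eta>\<^sup>2 * (real m)\<^sup>2 * \<Lambda>\<^sup>2 * (real t)\<^sup>2 / pi))"
proof -
  interpret gaussian_init d m eps_a
    using assms(2,3) by unfold_locales simp_all
  define \<Lambda> where "\<Lambda> = 6 * c1 * eps_a * sqrt (2 * ln (real m))"
  define E where "E = 9/2 * \<eta> * real t"
  define s where "s = 4 * (c4 - 1) * real m * sqrt (real m) * \<eta> * real t * \<Lambda> / sqrt pi"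
  define B1 where "B1 = {\<omega> \<in> space (init_measure d m eps_a). \<exists>r\<in>{1..m}. \<Lambda> < \<bar>\<omega> (A i r)\<bar>}"
  define B2 where "B2 = {\<omega> \<in> space (init_measure d m eps_a).
      real m * (E * \<Lambda> * sqrt (real m) / sqrt pi) + s \<le> (\<Sum>r=1..m. kink_indicator (E * \<Lambda>) i x r \<omega>)}"
  have c1: "0 < c1" and \<Lambda>: "0 \<le> \<Lambda>" and E: "0 \<le> E" and s: "0 \<le> s"
    using assms(2,3,5,10,11) by (simp_all add: \<Lambda>_def E_def s_def)
  define bound where "bound = 192 * \<eta>\<^sup>2 * real m powr 1.5 * \<Lambda>\<^sup>2 * c1 * c4 * eps_a * (real t)\<^sup>2
    * sqrt (ln (real m)) / sqrt pi"
  have close: "\<bar>netN m \<omega> i (sgd m Q \<eta> \<omega> i xs t) x - netP m \<omega> i (sgd m Q \<eta> \<omega> i xs t) x\<bar> \<le> bound"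
    if "\<omega> \<in> space (init_measure d m eps_a)" "\<omega> \<notin> B1" "\<omega> \<notin> B2" for \<omega>
    unfolding bound_def
    by (intro abs_netN_minus_netP_sgd_bound[OF assms(2-8) c1 assms(11) \<Lambda>_def])
      (use that in \<open>auto simp: B1_def B2_def E_def s_def not_le not_less\<close>)
  show ?thesis
    unfolding Let_def \<Lambda>_def[symmetric] bound_def[symmetric]
  proof (rule prob_ge_of_compl_subset[of B1 B2], goal_cases good prob_B1 prob_B2 B1_event B2_event good_event)
    case good
    show ?case
      using close phi_lipschitz by blast
  next
    case prob_B1
    show ?case
      using prob_large_output_weight_le[OF assms(7) \<Lambda>] weight_tail_bound[of m c1 eps_a] assms(2,3,10)
      unfolding B1_def \<Lambda>_def by simp
  next
    case prob_B2
    show ?case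
      using prob_many_kinks_le[OF assms(7,8) mult_nonneg_nonneg[OF E \<Lambda>] s]
        hoeffding_exponent_eq[of "real m" c4 \<eta> "real t" \<Lambda>] assms(2)
      unfolding B2_def s_def by simp
  next
    case B1_event
    show ?case
      unfolding B1_def by measurable
  next
    case B2_event
    show ?case
      unfolding B2_def by measurable
  next
    case good_event
    show ?case
      by (intro sets.sets_Collect_conj borel_measurable_le borel_measurable_abs borel_measurable_diff
          measurable_compose[OF _ measurable_phi] measurable_netN_netP_sgd borel_measurable_const)
  qed
qed

end
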